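(* Over the space of $n$-variate Fourier polynomials $f$ of degree at most $d$, \[\mathbb E f^4\preceq 9^d\,(\mathbb E f^2)^2,\] where the expectations are over the uniform distribution on $\{\pm1\}^n$.
   Context: An $n$-variate Fourier polynomial of degree at most $d$ is a function $f:\{\pm1\}^n\to\mathbb R$ of the form $f=\sum_{\alpha\subseteq[n],|\alpha|\le d}\hat f_\alpha\chi_\alpha$ with $\chi_\alpha(x)=\prod_{i\in\alpha}x_i$. Both $\mathbb E f^4$ and $(\mathbb E f^2)^2$ are viewed as polynomials in the real coefficients $\{\hat f_\alpha\}_{|\alpha|\le d}$, and $P\preceq Q$ means that $Q-P$ is a sum of squares of polynomials in these coefficients. *)

theory Defs
  imports Complex_Main "HOL-Library.FuncSet"
begin

type_synonym coeffs = "nat set \<Rightarrow> real"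

definition idx :: "nat \<Rightarrow> nat \<Rightarrow> nat set set" where
  "idx n d = {\<alpha>. \<alpha> \<subseteq> {0..<n} \<and> card \<alpha> \<le> d}"

definition cube :: "nat \<Rightarrow> (nat \<Rightarrow> real) set" where
  "cube n = ({0..<n} \<rightarrow>\<^sub>E {-1, 1})"

definition chi :: "nat set \<Rightarrow> (nat \<Rightarrow> real) \<Rightarrow> real" where
  "chi \<alpha> x = (\<Prod>i\<in>\<alpha>. x i)"

definition fourier :: "nat \<Rightarrow> nat \<Rightarrow> coeffs \<Rightarrow> (nat \<Rightarrow> real) \<Rightarrow> real" where
  "fourier n d c x = (\<Sum>\<alpha>\<in>idx n d. c \<alpha> * chi \<alpha> x)"

definition expect :: "nat \<Rightarrow> ((nat \<Rightarrow> real) \<Rightarrow> real) \<Rightarrow> real" where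
  "expect n g = (\<Sum>x\<in>cube n. g x) / 2 ^ n"

inductive poly_fun :: "nat set set \<Rightarrow> (coeffs \<Rightarrow> real) \<Rightarrow> bool" for I where
  const: "poly_fun I (\<lambda>c. a)"
| var: "\<alpha> \<in> I \<Longrightarrow> poly_fun I (\<lambda>c. c \<alpha>)"
| add: "poly_fun I p \<Longrightarrow> poly_fun I q \<Longrightarrow> poly_fun I (\<lambda>c. p c + q c)"
| mult: "poly_fun I p \<Longrightarrow> poly_fun I q \<Longrightarrow> poly_fun I (\<lambda>c. p c * q c)"

definition sos :: "nat set set \<Rightarrow> (coeffs \<Rightarrow> real) \<Rightarrow> bool" where
  "sos I p \<longleftrightarrow> (\<exists>qs. (\<forall>q\<in>set qs. poly_fun I q) \<and> (\<forall>c. p c = (\<Sum>q\<leftarrow>qs. (q c)^2)))"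

end

theory Submission
  imports Defs
begin

text \<open>For arbitrary coefficient families a, b on Pow {0..<n} put
  f_a = \<Sum> a_\<alpha> \<chi>_\<alpha> and W(a) = \<Sum> 3^|\<alpha>| a_\<alpha>^2, the squared 2-norm of the noise operator
  T_sqrt(3) applied to f_a. Then W(a) W(b) - E[f_a^2 f_b^2] is a sum of squares: writing
  f_a = A + x_n A' and f_b = B + x_n B', the average over x_n of f_a^2 f_b^2 is
  A^2 B^2 + 3 A^2 B'^2 + 3 A'^2 B^2 + A'^2 B'^2 - 2 (A B' - A' B)^2, while W(a) = W(A) + 3 W(A'),
  so the difference is a nonnegative combination of four instances of the induction hypothesis,
  W(A') W(B') and a square. For f of degree at most d, 3^d E f^2 - W(f) is a nonnegative
  diagonal form, and 9^d (E f^2)^2 - E f^4 = (3^d E f^2 - W)(3^d E f^2 + W) + (W^2 - E f^4).\<close>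

lemma finite_cube: "finite (cube n)"
  unfolding cube_def by (auto intro: finite_PiE)

lemma sum_cube_Suc:
  "(\<Sum>x\<in>cube (Suc n). h x) = (\<Sum>x\<in>cube n. h (x(n:=1)) + h (x(n:=-1)))"
proof -
  have "cube (Suc n) = (\<lambda>(s, x). x(n := s)) ` ({-1,1} \<times> cube n)"
    unfolding cube_def by (simp add: atLeast0_lessThan_Suc PiE_insert_eq)
  moreover have "inj_on (\<lambda>(s, x). x(n := s)) ({-1,1} \<times> cube n)"
    using inj_combinator[of n "{0..<n}" "\<lambda>_. {-1,1::real}"] unfolding cube_def by simp
  ultimately have "(\<Sum>x\<in>cube (Suc n). h x) = (\<Sum>(s, x)\<in>{-1,1} \<times> cube n. h (x(n := s)))"
    by (simp add: sum.reindex case_prod_unfold)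
  also have "\<dots> = (\<Sum>s\<in>{-1,1::real}. \<Sum>x\<in>cube n. h (x(n := s)))"
    by (rule sum.cartesian_product[symmetric])
  also have "\<dots> = (\<Sum>x\<in>cube n. h (x(n:=1)) + h (x(n:=-1)))"
    by (simp add: sum.distrib algebra_simps)
  finally show ?thesis .
qed

lemma expect_0: "expect 0 h = h (\<lambda>_. undefined)"
  unfolding expect_def cube_def by simp

lemma expect_Suc: "expect (Suc n) h = expect n (\<lambda>x. (h (x(n:=1)) + h (x(n:=-1))) / 2)"
  unfolding expect_def sum_cube_Suc by (simp add: sum_divide_distrib[symmetric])

lemma expect_add: "expect n (\<lambda>x. g x + h x) = expect n g + expect n h"
  unfolding expect_def by (simp add: sum.distrib add_divide_distrib)

lemma expect_diff: "expect n (\<lambda>x. g x - h x) = expect n g - expect n h"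
  unfolding expect_def by (simp add: sum_subtractf diff_divide_distrib)

lemma expect_cmult: "expect n (\<lambda>x. k * h x) = k * expect n h"
  unfolding expect_def by (simp add: sum_distrib_left[symmetric])

lemma poly_fun_cmult: "poly_fun I p \<Longrightarrow> poly_fun I (\<lambda>c. k * p c)"
  by (rule poly_fun.mult[OF poly_fun.const])

lemma poly_fun_diff:
  assumes "poly_fun I p" "poly_fun I q"
  shows "poly_fun I (\<lambda>c. p c - q c)"
proof -
  have "poly_fun I (\<lambda>c. p c + (-1) * q c)"
    using assms by (intro poly_fun.add poly_fun_cmult)
  then show ?thesis by simp
qed

lemma poly_fun_sum:
  "finite A \<Longrightarrow> (\<And>x. x \<in> A \<Longrightarrow> poly_fun I (p x)) \<Longrightarrow> poly_fun I (\<lambda>c. \<Sum>x\<in>A. p x c)"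
proof (induction A rule: finite_induct)
  case empty
  then show ?case using poly_fun.const[of I 0] by simp
next
  case (insert a A)
  then show ?case by (simp add: poly_fun.add)
qed

lemma sos_cong: "sos I q \<Longrightarrow> (\<And>c. p c = q c) \<Longrightarrow> sos I p"
  unfolding sos_def by metis

lemma sos_0: "sos I (\<lambda>c. 0)"
  unfolding sos_def by (rule exI[of _ "[]"]) simp

lemma sos_square: "poly_fun I q \<Longrightarrow> sos I (\<lambda>c. (q c)^2)"
  unfolding sos_def by (rule exI[of _ "[q]"]) simp

lemma sos_add:
  assumes "sos I p" "sos I q"
  shows "sos I (\<lambda>c. p c + q c)"
proof -
  obtain ps qs where "\<forall>r\<in>set ps. poly_fun I r" "\<forall>c. p c = (\<Sum>r\<leftarrow>ps. (r c)^2)"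
    "\<forall>r\<in>set qs. poly_fun I r" "\<forall>c. q c = (\<Sum>r\<leftarrow>qs. (r c)^2)"
    using assms unfolding sos_def by blast
  then show ?thesis
    unfolding sos_def by (intro exI[of _ "ps @ qs"]) auto
qed

lemma sos_cmult:
  assumes "0 \<le> k" "sos I p"
  shows "sos I (\<lambda>c. k * p c)"
proof -
  obtain ps where ps: "\<forall>r\<in>set ps. poly_fun I r" "\<forall>c. p c = (\<Sum>r\<leftarrow>ps. (r c)^2)"
    using assms(2) unfolding sos_def by blast
  have "k * p c = (\<Sum>r\<leftarrow>map (\<lambda>r c. sqrt k * r c) ps. (r c)^2)" for c
    using ps(2) assms(1) by (simp add: sum_list_const_mult[symmetric] o_def power_mult_distrib)
  then show ?thesis
    unfolding sos_def using ps(1)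
    by (intro exI[of _ "map (\<lambda>r c. sqrt k * r c) ps"]) (auto intro: poly_fun_cmult)
qed

lemma sos_sum:
  "finite A \<Longrightarrow> (\<And>x. x \<in> A \<Longrightarrow> sos I (p x)) \<Longrightarrow> sos I (\<lambda>c. \<Sum>x\<in>A. p x c)"
proof (induction A rule: finite_induct)
  case empty
  then show ?case by (simp add: sos_0)
next
  case (insert a A)
  then show ?case by (simp add: sos_add)
qed

lemma sos_sum_list: "(\<And>r. r \<in> set rs \<Longrightarrow> sos I (p r)) \<Longrightarrow> sos I (\<lambda>c. \<Sum>r\<leftarrow>rs. p r c)"
  by (induction rs) (simp_all add: sos_0 sos_add)

lemma sos_mult:
  assumes "sos I p" "sos I q"
  shows "sos I (\<lambda>c. p c * q c)"
proof -
  obtain ps where ps: "\<forall>r\<in>set ps. poly_fun I r" "\<forall>c. p c = (\<Sum>r\<leftarrow>ps. (r c)^2)"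
    using assms(1) unfolding sos_def by blast
  obtain qs where qs: "\<forall>s\<in>set qs. poly_fun I s" "\<forall>c. q c = (\<Sum>s\<leftarrow>qs. (s c)^2)"
    using assms(2) unfolding sos_def by blast
  have "sos I (\<lambda>c. \<Sum>r\<leftarrow>ps. \<Sum>s\<leftarrow>qs. (r c * s c)^2)"
    using ps(1) qs(1) by (intro sos_sum_list sos_square poly_fun.mult) auto
  then show ?thesis
    by (rule sos_cong)
      (simp add: ps(2) qs(2) sum_list_mult_const sum_list_const_mult power_mult_distrib)
qed

definition fourier_expansion :: "nat \<Rightarrow> (nat set \<Rightarrow> real) \<Rightarrow> (nat \<Rightarrow> real) \<Rightarrow> real" where
  "fourier_expansion n a x = (\<Sum>\<alpha>\<in>Pow {0..<n}. a \<alpha> * chi \<alpha> x)"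

definition weight3 :: "nat \<Rightarrow> (nat set \<Rightarrow> real) \<Rightarrow> real" where
  "weight3 n a = (\<Sum>\<alpha>\<in>Pow {0..<n}. 3 ^ card \<alpha> * (a \<alpha>)^2)"

lemma sum_Pow_lessThan_Suc:
  "(\<Sum>\<alpha>\<in>Pow {0..<Suc n}. g \<alpha>) = (\<Sum>\<alpha>\<in>Pow {0..<n}. g \<alpha>) + (\<Sum>\<alpha>\<in>Pow {0..<n}. g (insert n \<alpha>))"
proof -
  have inj: "inj_on (insert n) (Pow {0..<n})"
    by (rule inj_onI) (metis PowD atLeastLessThan_iff insert_ident less_irrefl subsetD)
  have "(\<Sum>\<alpha>\<in>Pow {0..<Suc n}. g \<alpha>) = (\<Sum>\<alpha>\<in>Pow {0..<n} \<union> insert n ` Pow {0..<n}. g \<alpha>)"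
    by (simp add: atLeast0_lessThan_Suc Pow_insert)
  also have "\<dots> = (\<Sum>\<alpha>\<in>Pow {0..<n}. g \<alpha>) + (\<Sum>\<alpha>\<in>insert n ` Pow {0..<n}. g \<alpha>)"
    by (rule sum.union_disjoint) auto
  also have "(\<Sum>\<alpha>\<in>insert n ` Pow {0..<n}. g \<alpha>) = (\<Sum>\<alpha>\<in>Pow {0..<n}. g (insert n \<alpha>))"
    by (simp add: sum.reindex[OF inj])
  finally show ?thesis .
qed

lemma finite_notin_Pow_lessThan: "\<alpha> \<in> Pow {0..<n::nat} \<Longrightarrow> finite \<alpha> \<and> n \<notin> \<alpha>"
  using finite_subset[of \<alpha> "{0..<n}"] by auto

lemma chi_insert_upd:
  "\<alpha> \<in> Pow {0..<n} \<Longrightarrow> chi (insert n \<alpha>) (x(n:=s)) = s * chi \<alpha> x"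
  "\<alpha> \<in> Pow {0..<n} \<Longrightarrow> chi \<alpha> (x(n:=s)) = chi \<alpha> x"
  using finite_notin_Pow_lessThan[of \<alpha> n] unfolding chi_def
  by (auto intro!: prod.cong)

lemma fourier_expansion_Suc_upd:
  "fourier_expansion (Suc n) a (x(n:=s))
     = fourier_expansion n a x + s * fourier_expansion n (\<lambda>\<alpha>. a (insert n \<alpha>)) x"
  unfolding fourier_expansion_def sum_Pow_lessThan_Suc sum_distrib_left
  by (auto intro!: sum.cong arg_cong2[where f="(+)"] simp: chi_insert_upd simp del: Pow_iff)

lemma weight3_Suc: "weight3 (Suc n) a = weight3 n a + 3 * weight3 n (\<lambda>\<alpha>. a (insert n \<alpha>))"
  unfolding weight3_def sum_Pow_lessThan_Suc sum_distrib_left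
  by (auto intro!: sum.cong simp: finite_notin_Pow_lessThan simp del: Pow_iff)

lemma parseval: "expect n (\<lambda>x. (fourier_expansion n a x)^2) = (\<Sum>\<alpha>\<in>Pow {0..<n}. (a \<alpha>)^2)"
proof (induction n arbitrary: a)
  case 0
  then show ?case by (simp add: expect_0 fourier_expansion_def chi_def)
next
  case (Suc n)
  let ?a' = "\<lambda>\<alpha>. a (insert n \<alpha>)"
  have "expect (Suc n) (\<lambda>x. (fourier_expansion (Suc n) a x)^2)
      = expect n (\<lambda>x. (fourier_expansion n a x)^2 + (fourier_expansion n ?a' x)^2)"
    unfolding expect_Suc fourier_expansion_Suc_upd
    by (intro arg_cong[where f="expect n"] ext) (simp add: power2_eq_square field_simps)
  then show ?case
    unfolding expect_add Suc sum_Pow_lessThan_Suc .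
qed

lemma square_product_average:
  fixes A A' B B' :: real
  shows "((A + A')^2 * (B + B')^2 + (A - A')^2 * (B - B')^2) / 2
    = A^2 * B^2 + 3 * (A^2 * B'^2) + 3 * (A'^2 * B^2) + A'^2 * B'^2 - 2 * (A * B' - A' * B)^2"
  by (simp add: power2_eq_square field_simps)

lemma poly_fun_fourier_expansion:
  "(\<And>\<alpha>. poly_fun I (a \<alpha>)) \<Longrightarrow> poly_fun I (\<lambda>c. fourier_expansion n (\<lambda>\<alpha>. a \<alpha> c) x)"
  unfolding fourier_expansion_def
  by (intro poly_fun_sum) (auto simp: mult.commute[of _ "chi _ x"] intro: poly_fun_cmult)

lemma sos_weight3: "(\<And>\<alpha>. poly_fun I (a \<alpha>)) \<Longrightarrow> sos I (\<lambda>c. weight3 n (\<lambda>\<alpha>. a \<alpha> c))"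
  unfolding weight3_def by (intro sos_sum sos_cmult sos_square) auto

lemma sos_expect_square: "(\<And>x. poly_fun I (q x)) \<Longrightarrow> sos I (\<lambda>c. expect n (\<lambda>x. (q x c)^2))"
  unfolding expect_def divide_inverse mult.commute[of _ "inverse _"]
  by (intro sos_sum sos_cmult sos_square finite_cube) auto

lemma sos_bonami:
  assumes "\<And>\<alpha>. poly_fun I (a \<alpha>)" "\<And>\<alpha>. poly_fun I (b \<alpha>)"
  shows "sos I (\<lambda>c. weight3 n (\<lambda>\<alpha>. a \<alpha> c) * weight3 n (\<lambda>\<alpha>. b \<alpha> c)
    - expect n (\<lambda>x. (fourier_expansion n (\<lambda>\<alpha>. a \<alpha> c) x)^2 * (fourier_expansion n (\<lambda>\<alpha>. b \<alpha> c) x)^2))"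
  using assms
proof (induction n arbitrary: a b)
  case 0
  show ?case
    by (rule sos_cong[OF sos_0])
      (simp add: expect_0 fourier_expansion_def weight3_def chi_def power2_eq_square)
next
  case (Suc n)
  let ?a' = "\<lambda>\<alpha>. a (insert n \<alpha>)" and ?b' = "\<lambda>\<alpha>. b (insert n \<alpha>)"
  let ?F = "\<lambda>p c x. fourier_expansion n (\<lambda>\<alpha>. p \<alpha> c) x"
  let ?W = "\<lambda>p c. weight3 n (\<lambda>\<alpha>. p \<alpha> c)"
  let ?D = "\<lambda>p q c. ?W p c * ?W q c - expect n (\<lambda>x. (?F p c x)^2 * (?F q c x)^2)"
  have "sos I (\<lambda>c. ?D a b c + 3 * ?D a ?b' c + 3 * ?D ?a' b c + ?D ?a' ?b' c
      + 8 * (?W ?a' c * ?W ?b' c) + 2 * expect n (\<lambda>x. (?F a c x * ?F ?b' c x - ?F ?a' c x * ?F b c x)^2))"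
    by (intro sos_add sos_cmult sos_mult sos_weight3 sos_expect_square poly_fun_diff
        poly_fun.mult poly_fun_fourier_expansion Suc) simp_all
  then show ?case
  proof (rule sos_cong)
    fix c
    have "expect (Suc n) (\<lambda>x. (fourier_expansion (Suc n) (\<lambda>\<alpha>. a \<alpha> c) x)^2
          * (fourier_expansion (Suc n) (\<lambda>\<alpha>. b \<alpha> c) x)^2)
        = expect n (\<lambda>x. (?F a c x)^2 * (?F b c x)^2 + 3 * ((?F a c x)^2 * (?F ?b' c x)^2)
          + 3 * ((?F ?a' c x)^2 * (?F b c x)^2) + (?F ?a' c x)^2 * (?F ?b' c x)^2
          - 2 * (?F a c x * ?F ?b' c x - ?F ?a' c x * ?F b c x)^2)"
      unfolding expect_Suc fourier_expansion_Suc_upd mult_1 mult_minus1 diff_conv_add_uminus[symmetric]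
        square_product_average ..
    then show "weight3 (Suc n) (\<lambda>\<alpha>. a \<alpha> c) * weight3 (Suc n) (\<lambda>\<alpha>. b \<alpha> c)
        - expect (Suc n) (\<lambda>x. (fourier_expansion (Suc n) (\<lambda>\<alpha>. a \<alpha> c) x)^2
          * (fourier_expansion (Suc n) (\<lambda>\<alpha>. b \<alpha> c) x)^2)
      = ?D a b c + 3 * ?D a ?b' c + 3 * ?D ?a' b c + ?D ?a' ?b' c
        + 8 * (?W ?a' c * ?W ?b' c) + 2 * expect n (\<lambda>x. (?F a c x * ?F ?b' c x - ?F ?a' c x * ?F b c x)^2)"
      by (simp add: weight3_Suc expect_add expect_diff expect_cmult algebra_simps)
  qed
qed

definition low_coeffs :: "nat \<Rightarrow> nat \<Rightarrow> coeffs \<Rightarrow> nat set \<Rightarrow> real" where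
  "low_coeffs n d c \<alpha> = (if \<alpha> \<in> idx n d then c \<alpha> else 0)"

lemma finite_idx: "finite (idx n d)"
  unfolding idx_def by (rule finite_subset[of _ "Pow {0..<n}"]) auto

lemma sum_Pow_if_idx:
  "(\<Sum>\<alpha>\<in>Pow {0..<n}. if \<alpha> \<in> idx n d then g \<alpha> else 0) = (\<Sum>\<alpha>\<in>idx n d. g \<alpha>)"
proof -
  have "idx n d = Pow {0..<n} \<inter> idx n d"
    unfolding idx_def by auto
  then show ?thesis
    by (simp add: sum.inter_restrict[symmetric])
qed

lemma fourier_eq_fourier_expansion: "fourier n d c x = fourier_expansion n (low_coeffs n d c) x"
  unfolding fourier_def fourier_expansion_def sum_Pow_if_idx[symmetric] low_coeffs_def
  by (rule sum.cong) simp_all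

lemma weight3_low_coeffs:
  "weight3 n (low_coeffs n d c) = (\<Sum>\<alpha>\<in>idx n d. 3 ^ card \<alpha> * (c \<alpha>)^2)"
  unfolding weight3_def sum_Pow_if_idx[symmetric] low_coeffs_def
  by (rule sum.cong) simp_all

lemma expect_fourier_square: "expect n (\<lambda>x. (fourier n d c x)^2) = (\<Sum>\<alpha>\<in>idx n d. (c \<alpha>)^2)"
  unfolding fourier_eq_fourier_expansion parseval sum_Pow_if_idx[symmetric] low_coeffs_def
  by (rule sum.cong) simp_all

lemma poly_fun_low_coeffs: "poly_fun (idx n d) (\<lambda>c. low_coeffs n d c \<alpha>)"
  unfolding low_coeffs_def by (cases "\<alpha> \<in> idx n d") (simp_all add: poly_fun.var poly_fun.const)

lemma sos_weight3_low_coeffs_le: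
  "sos (idx n d) (\<lambda>c. 3 ^ d * (\<Sum>\<alpha>\<in>idx n d. (c \<alpha>)^2) - weight3 n (low_coeffs n d c))"
proof -
  have "sos (idx n d) (\<lambda>c. \<Sum>\<alpha>\<in>idx n d. (3 ^ d - 3 ^ card \<alpha>) * (c \<alpha>)^2)"
  proof (intro sos_sum sos_cmult sos_square poly_fun.var finite_idx)
    fix \<alpha> assume "\<alpha> \<in> idx n d"
    then show "0 \<le> (3::real) ^ d - 3 ^ card \<alpha>"
      by (simp add: idx_def power_increasing)
  qed
  then show ?thesis
    by (rule sos_cong) (simp add: weight3_low_coeffs sum_distrib_left sum_subtractf algebra_simps)
qed

theorem lemma5p1:
  fixes n d :: nat
  shows "sos (idx n d)
           (\<lambda>c. 9 ^ d * (expect n (\<lambda>x. (fourier n d c x)^2))^2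
                - expect n (\<lambda>x. (fourier n d c x)^4))"
proof -
  let ?I = "idx n d"
  define S :: "coeffs \<Rightarrow> real" where "S c = (\<Sum>\<alpha>\<in>?I. (c \<alpha>)^2)" for c
  define W where "W c = weight3 n (low_coeffs n d c)" for c
  have "sos ?I (\<lambda>c. 3 ^ d * S c - W c)"
    using sos_weight3_low_coeffs_le unfolding S_def W_def .
  moreover have "sos ?I (\<lambda>c. 3 ^ d * S c + W c)"
    unfolding S_def W_def
    using sos_weight3[of ?I "\<lambda>\<alpha> c. low_coeffs n d c \<alpha>"] poly_fun_low_coeffs finite_idx
    by (intro sos_add sos_cmult sos_sum sos_square poly_fun.var) auto
  moreover have "sos ?I (\<lambda>c. W c * W c - expect n (\<lambda>x. (fourier n d c x)^2 * (fourier n d c x)^2))"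
    using sos_bonami[of ?I "\<lambda>\<alpha> c. low_coeffs n d c \<alpha>" "\<lambda>\<alpha> c. low_coeffs n d c \<alpha>" n]
    by (simp add: W_def fourier_eq_fourier_expansion poly_fun_low_coeffs)
  ultimately have "sos ?I (\<lambda>c. (3 ^ d * S c - W c) * (3 ^ d * S c + W c)
      + (W c * W c - expect n (\<lambda>x. (fourier n d c x)^2 * (fourier n d c x)^2)))"
    by (rule sos_add[OF sos_mult])
  then show ?thesis
  proof (rule sos_cong)
    fix c
    have "(9::real) ^ d = 3 ^ d * 3 ^ d"
      by (simp add: power_mult_distrib[symmetric])
    then show "9 ^ d * (expect n (\<lambda>x. (fourier n d c x)^2))^2 - expect n (\<lambda>x. (fourier n d c x)^4)
      = (3 ^ d * S c - W c) * (3 ^ d * S c + W c)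
        + (W c * W c - expect n (\<lambda>x. (fourier n d c x)^2 * (fourier n d c x)^2))"
      unfolding expect_fourier_square S_def[symmetric]
      by (simp add: power2_eq_square power4_eq_xxxx mult.assoc algebra_simps)
  qed
qed

end
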